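(* The compactified Hilbert modular threefold $X$ has $8$ cusps, and the group $G=SL_2(\mathcal O)/\Gamma(p)$ acts transitively on them.
   Context: Let $w=\zeta_7+\zeta_7^{-1}$ with $\zeta_7=e^{2\pi i/7}$, $K=\mathbb Q(w)$, $\mathcal O=\mathbb Z[w]$, $p=(2-w)$ the prime over $7$. $\Gamma(p)$ is the principal congruence subgroup of $SL_2(\mathcal O)$ of level $p$, acting on $\mathfrak H^3$ through the three real embeddings of $K$. $X$ is the Baily–Borel compactification of $\Gamma(p)\backslash\mathfrak H^3$, obtained by adjoining cusps $\Gamma(p)\backslash\mathbb P^1(K)$. *)

theory Defs
  imports Complex_Main
begin

text \<open>We fix the real embedding w = zeta_7 + zeta_7^{-1} = 2 cos(2 pi/7) and realise
  K = Q(w), O = Z[w] as subsets of the reals (K has degree 3 with basis 1, w, w^2).\<close>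

definition w :: real where "w = 2 * cos (2 * pi / 7)"

definition KK :: "real set" where
  "KK = {of_rat a + of_rat b * w + of_rat c * w\<^sup>2 | a b c. True}"

definition OK :: "real set" where
  "OK = {of_int a + of_int b * w + of_int c * w\<^sup>2 | a b c. True}"

definition in_p :: "real \<Rightarrow> bool" where
  "in_p x \<longleftrightarrow> (\<exists>t\<in>OK. x = (2 - w) * t)"

text \<open>A 2x2 matrix (a b; c d) is encoded as the quadruple (a,b,c,d).\<close>
definition SL2O :: "(real \<times> real \<times> real \<times> real) set" where
  "SL2O = {(a,b,c,d). a \<in> OK \<and> b \<in> OK \<and> c \<in> OK \<and> d \<in> OK \<and> a * d - b * c = 1}"

definition Gamma_p :: "(real \<times> real \<times> real \<times> real) set" where
  "Gamma_p = {(a,b,c,d). (a,b,c,d) \<in> SL2O \<and> in_p (a - 1) \<and> in_p b \<and> in_p c \<and> in_p (d - 1)}"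

text \<open>Linear action of a matrix on a column vector (x,y); on P^1 this is z \<mapsto> (az+b)/(cz+d).\<close>
fun mvec :: "real \<times> real \<times> real \<times> real \<Rightarrow> real \<times> real \<Rightarrow> real \<times> real" where
  "mvec (a,b,c,d) (x,y) = (a * x + b * y, c * x + d * y)"

definition K2nz :: "(real \<times> real) set" where
  "K2nz = (KK \<times> KK) - {(0,0)}"

definition proj_rel :: "((real \<times> real) \<times> (real \<times> real)) set" where
  "proj_rel = {((x,y),(x',y')). (x,y) \<in> K2nz \<and> (x',y') \<in> K2nz \<and>
                  (\<exists>k\<in>KK. k \<noteq> 0 \<and> x' = k * x \<and> y' = k * y)}"

definition P1K :: "(real \<times> real) set set" where
  "P1K = K2nz // proj_rel"

definition act :: "real \<times> real \<times> real \<times> real \<Rightarrow> (real \<times> real) set \<Rightarrow> (real \<times> real) set" where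
  "act g P = mvec g ` P"

definition cusp_rel :: "((real \<times> real) set \<times> (real \<times> real) set) set" where
  "cusp_rel = {(P,Q). P \<in> P1K \<and> Q \<in> P1K \<and> (\<exists>g\<in>Gamma_p. Q = act g P)}"

definition cusps :: "(real \<times> real) set set set" where
  "cusps = P1K // cusp_rel"

end

theory Submission
  imports Defs
begin

text \<open>
  \<open>\<O> = \<int>[w]\<close> is norm-Euclidean: the trace form is the sum of the squares of the three
  conjugates, so by AM-GM every point of \<open>K \<otimes> \<real>\<close> lies at trace distance less than \<open>\<surd>3\<close>
  from \<open>\<O>\<close> and leaves a remainder of smaller norm.  Hence every point of \<open>\<bbbP>\<^sup>1(K)\<close> is
  \<open>(a : c)\<close> for the first column of a matrix in \<open>SL\<^sub>2(\<O>)\<close>, so \<open>SL\<^sub>2(\<O>)\<close> is transitive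
  on \<open>\<bbbP>\<^sup>1(K)\<close> and, \<open>\<Gamma>(p)\<close> being normal, on the cusps.  Two such points whose columns are
  congruent modulo \<open>p\<close> are \<open>\<Gamma>(p)\<close>-equivalent, while \<open>\<Gamma>(p)\<close>-equivalent points with integral
  coordinates \<open>(x : y), (x' : y')\<close> satisfy \<open>x'y - y'x \<equiv> 0 mod p\<close>.  As \<open>w \<equiv> 2 mod p\<close>, the
  units \<open>\<plusminus>1, \<plusminus>w, \<plusminus>w\<^sup>2\<close> reduce onto \<open>\<bbbF>\<^sub>7\<^sup>*\<close>, so the cusps are represented exactly
  once each by the eight points \<open>(j : 1)\<close>, \<open>0 \<le> j < 7\<close>, and \<open>(1 : 0)\<close>.
\<close>

section \<open>The ring of integers \<open>\<int>[w]\<close>\<close>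

lemma w_cubic: "w^3 = 2*w + 1 - w^2"
proof -
  define t where "t = 2*pi/7"
  define c where "c = cos t"
  \<comment> \<open>\<open>cos (4t) = cos (3t)\<close>; dividing out the root \<open>cos t = 1\<close> leaves the minimal polynomial.\<close>
  have "cos (4*t) = cos (2*pi - 3*t)" unfolding t_def by (simp add: field_simps)
  hence "cos (4*t) = cos (3*t)" by (simp only: cos_2pi_minus)
  moreover have "cos (4*t) = 2*(2*c^2-1)^2 - 1"
    using cos_double_cos[of "2*t"] cos_double_cos[of t] unfolding c_def by (simp add: mult.assoc)
  moreover have "cos (3*t) = 4*c^3 - 3*c" unfolding c_def by (rule cos_treble_cos)
  ultimately have "(c - 1) * (8*c^3 + 4*c^2 - 4*c - 1) = 0"
    by (simp add: algebra_simps power2_eq_square power3_eq_cube)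
  moreover have "c < cos 0" using cos_mono_less_eq[of t 0] unfolding c_def t_def by simp
  ultimately have "8*c^3 + 4*c^2 - 4*c - 1 = 0" by simp
  moreover have wc: "w = 2*c" unfolding w_def c_def t_def by simp
  ultimately show ?thesis unfolding wc by (simp add: algebra_simps power2_eq_square power3_eq_cube)
qed

lemma Rats_root_monic_cubic_Ints:
  fixes r :: real and A B C :: int
  assumes "r \<in> \<rat>" "r^3 + A*r^2 + B*r + C = 0"
  shows "r \<in> \<int>"
proof -
  obtain p q :: int where q: "q > 0" "coprime p q" "r = of_int p / of_int q"
    using Rats_cases'[OF assms(1)] by metis
  have pq: "of_int p = r * of_int q" using q by simp
  have "real_of_int (p^3 + A*p^2*q + B*p*q^2 + C*q^3) = (r^3 + A*r^2 + B*r + C) * of_int q ^3"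
    by (simp add: pq algebra_simps power3_eq_cube power2_eq_square)
  hence "p^3 + A*p^2*q + B*p*q^2 + C*q^3 = 0" using assms(2) by (metis mult_zero_left of_int_eq_0_iff)
  hence "p^3 = q * (- A*p^2 - B*p*q - C*q^2)" by (simp add: algebra_simps power2_eq_square power3_eq_cube)
  hence "q dvd p^3" by simp
  moreover have "coprime q (p^3)" using q(2) by (simp add: coprime_commute)
  ultimately have "is_unit q" by (meson coprime_absorb_left coprime_common_divisor dvd_refl)
  hence "q = 1" using q(1) by simp
  thus ?thesis using q(3) by simp
qed

lemma w_cubic_no_Rats_root:
  fixes r :: real
  assumes "r \<in> \<rat>" shows "r^3 + r^2 - 2*r - 1 \<noteq> 0"
proof
  assume root: "r^3 + r^2 - 2*r - 1 = 0"
  hence "r \<in> \<int>" using Rats_root_monic_cubic_Ints[of r 1 "-2" "-1"] assms by simp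
  then obtain n where n: "r = of_int n" by (auto elim: Ints_cases)
  hence "real_of_int (n * (n^2 + n - 2)) = 1" using root by (simp add: algebra_simps power2_eq_square power3_eq_cube)
  hence n_eq: "n * (n^2 + n - 2) = 1" by linarith
  hence "n dvd 1" by (metis dvd_triv_left)
  hence "n = 1 \<or> n = -1" by auto
  thus False using n_eq by auto
qed

lemma w_not_Rats: "w \<notin> \<rat>"
  using w_cubic_no_Rats_root[of w] w_cubic by auto

lemma w_not_root_Rats_quadratic:
  fixes \<beta> \<gamma> :: real
  assumes "\<beta> \<in> \<rat>" "\<gamma> \<in> \<rat>" shows "w^2 + \<beta>*w + \<gamma> \<noteq> 0"
proof
  assume q: "w^2 + \<beta>*w + \<gamma> = 0"
  \<comment> \<open>the remainder of the cubic modulo this quadratic vanishes at the irrational \<open>w\<close>\<close>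
  hence rem: "(\<beta>^2 - \<gamma> - \<beta> - 2) * w + (\<beta>*\<gamma> - \<gamma> - 1) = 0" using w_cubic by algebra
  have "\<beta>^2 - \<gamma> - \<beta> - 2 = 0"
  proof (rule ccontr)
    assume "\<beta>^2 - \<gamma> - \<beta> - 2 \<noteq> 0"
    hence w_eq: "w = - (\<beta>*\<gamma> - \<gamma> - 1) / (\<beta>^2 - \<gamma> - \<beta> - 2)" using rem by (simp add: field_simps)
    have "w \<in> \<rat>" unfolding w_eq using assms by simp
    thus False using w_not_Rats by simp
  qed
  moreover from this have "\<beta>*\<gamma> - \<gamma> - 1 = 0" using rem by simp
  \<comment> \<open>so the quadratic divides the cubic, whose remaining root is \<open>\<beta> - 1\<close>\<close>
  ultimately have "(\<beta> - 1)^3 + (\<beta> - 1)^2 - 2*(\<beta> - 1) - 1 = 0" by algebra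
  thus False using w_cubic_no_Rats_root[of "\<beta> - 1"] assms by simp
qed

lemma w_Rats_independent:
  fixes a b c :: real
  assumes "a \<in> \<rat>" "b \<in> \<rat>" "c \<in> \<rat>" "a + b*w + c*w^2 = 0"
  shows "a = 0 \<and> b = 0 \<and> c = 0"
proof -
  have "c = 0"
  proof (rule ccontr)
    assume "c \<noteq> 0"
    hence "w^2 + (b/c)*w + a/c = 0" using assms(4) by (simp add: field_simps)
    thus False using w_not_root_Rats_quadratic[of "b/c" "a/c"] assms(1-3) by simp
  qed
  moreover have "b = 0"
  proof (rule ccontr)
    assume "b \<noteq> 0"
    hence w_eq: "w = - a / b" using assms(4) \<open>c = 0\<close> by (simp add: field_simps)
    have "w \<in> \<rat>" unfolding w_eq using assms(1,2) by simp
    thus False using w_not_Rats by simp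
  qed
  ultimately show ?thesis using assms(4) by simp
qed

definition of_coords :: "int \<Rightarrow> int \<Rightarrow> int \<Rightarrow> real" where
  "of_coords a b c = of_int a + of_int b * w + of_int c * w^2"

lemma OK_eq: "OK = {of_coords a b c | a b c. True}"
  unfolding OK_def of_coords_def by simp

lemma OK_E: assumes "x \<in> OK" obtains a b c where "x = of_coords a b c"
  using assms unfolding OK_eq by blast

lemma of_coords_in_OK [simp]: "of_coords a b c \<in> OK"
  unfolding OK_eq by blast

lemma of_coords_inject:
  assumes "of_coords a b c = of_coords a' b' c'"
  shows "a = a' \<and> b = b' \<and> c = c'"
proof -
  have "real_of_int (a - a') + real_of_int (b - b') * w + real_of_int (c - c') * w^2 = 0"
    using assms unfolding of_coords_def by (simp add: algebra_simps)
  hence "real_of_int (a - a') = 0 \<and> real_of_int (b - b') = 0 \<and> real_of_int (c - c') = 0"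
    by (intro w_Rats_independent) auto
  thus ?thesis by simp
qed

lemma of_coords_eq_0_iff: "of_coords a b c = 0 \<longleftrightarrow> a = 0 \<and> b = 0 \<and> c = 0"
  using of_coords_inject[of a b c 0 0 0] by (auto simp: of_coords_def)

lemma of_coords_add: "of_coords a b c + of_coords d e f = of_coords (a+d) (b+e) (c+f)"
  unfolding of_coords_def by (simp add: algebra_simps)

lemma of_coords_diff: "of_coords a b c - of_coords d e f = of_coords (a-d) (b-e) (c-f)"
  unfolding of_coords_def by (simp add: algebra_simps)

lemma of_coords_minus: "- of_coords a b c = of_coords (-a) (-b) (-c)"
  unfolding of_coords_def by (simp add: algebra_simps)

lemma of_coords_mult: "of_coords a b c * of_coords d e f =
  of_coords (a*d + b*f + c*e - c*f) (a*e + b*d + 2*b*f + 2*c*e - c*f) (a*f + b*e - b*f + c*d - c*e + 3*c*f)"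
  unfolding of_coords_def using w_cubic by simp algebra

lemma OK_add: "x \<in> OK \<Longrightarrow> y \<in> OK \<Longrightarrow> x + y \<in> OK"
  by (auto elim!: OK_E simp: of_coords_add)

lemma OK_diff: "x \<in> OK \<Longrightarrow> y \<in> OK \<Longrightarrow> x - y \<in> OK"
  by (auto elim!: OK_E simp: of_coords_diff)

lemma OK_minus: "x \<in> OK \<Longrightarrow> - x \<in> OK"
  by (auto elim!: OK_E simp: of_coords_minus)

lemma OK_mult: "x \<in> OK \<Longrightarrow> y \<in> OK \<Longrightarrow> x * y \<in> OK"
  by (auto elim!: OK_E simp: of_coords_mult)

lemma OK_of_int [simp]: "of_int n \<in> OK"
  using of_coords_in_OK[of n 0 0] by (simp add: of_coords_def)

lemma OK_0 [simp]: "0 \<in> OK" and OK_1 [simp]: "1 \<in> OK"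
  using OK_of_int[of 0] OK_of_int[of 1] by simp_all

lemma OK_power: "x \<in> OK \<Longrightarrow> x ^ n \<in> OK"
  by (induction n) (auto intro: OK_mult)

lemma OK_of_nat [simp]: "of_nat n \<in> OK"
  using OK_of_int[of "int n"] by simp

lemma OK_numeral [simp]: "numeral n \<in> OK"
  using OK_of_int[of "numeral n"] by simp

lemma OK_w [simp]: "w \<in> OK"
  using of_coords_in_OK[of 0 1 0] by (simp add: of_coords_def)

definition norm_form :: "int \<Rightarrow> int \<Rightarrow> int \<Rightarrow> int" where
  "norm_form a b c = a^3 - a^2*b + 5*a^2*c - 2*a*b^2 - a*b*c + 6*a*c^2 + b^3 - b^2*c - 2*b*c^2 + c^3"

text \<open>The two further factors are the conjugates of \<open>a + b w + c w\<^sup>2\<close> under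
  \<open>w \<mapsto> w\<^sup>2 - 2\<close> and \<open>w \<mapsto> 1 - w - w\<^sup>2\<close>.\<close>

lemma norm_form_conjugates:
  "of_coords a b c * of_coords (a - 2*b + 3*c) (-c) (b - c) * of_coords (a + b + 2*c) (c - b) (-b)
   = of_int (norm_form a b c)"
  unfolding of_coords_def norm_form_def using w_cubic by simp algebra

lemma norm_form_mult:
  "norm_form (a*d + b*f + c*e - c*f) (a*e + b*d + 2*b*f + 2*c*e - c*f) (a*f + b*e - b*f + c*d - c*e + 3*c*f)
   = norm_form a b c * norm_form d e f"
  unfolding norm_form_def by algebra

lemma norm_form_eq_0_iff: "norm_form a b c = 0 \<longleftrightarrow> a = 0 \<and> b = 0 \<and> c = 0"
proof
  assume "norm_form a b c = 0"
  hence "of_coords a b c = 0 \<or> of_coords (a - 2*b + 3*c) (-c) (b - c) = 0 \<or>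
         of_coords (a + b + 2*c) (c - b) (-b) = 0"
    using norm_form_conjugates[of a b c] by simp
  thus "a = 0 \<and> b = 0 \<and> c = 0" unfolding of_coords_eq_0_iff by auto
qed (simp add: norm_form_def)

definition normO :: "real \<Rightarrow> int" where
  "normO x = (THE n. \<exists>a b c. x = of_coords a b c \<and> n = norm_form a b c)"

lemma normO_of_coords [simp]: "normO (of_coords a b c) = norm_form a b c"
  unfolding normO_def by (rule the_equality) (auto dest: of_coords_inject)

lemma normO_mult: "x \<in> OK \<Longrightarrow> y \<in> OK \<Longrightarrow> normO (x*y) = normO x * normO y"
  by (auto elim!: OK_E simp: of_coords_mult norm_form_mult)

lemma normO_eq_0_iff: "x \<in> OK \<Longrightarrow> normO x = 0 \<longleftrightarrow> x = 0"
  by (auto elim!: OK_E simp: norm_form_eq_0_iff of_coords_eq_0_iff)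

lemma normO_of_int: "normO (of_int n) = n^3"
  using normO_of_coords[of n 0 0] by (simp add: of_coords_def norm_form_def)

lemma OK_mult_eq_normO: assumes "x \<in> OK" shows "\<exists>x'\<in>OK. x * x' = of_int (normO x)"
proof -
  obtain a b c where x: "x = of_coords a b c" using assms by (rule OK_E)
  show ?thesis
    by (rule bexI[of _ "of_coords (a - 2*b + 3*c) (-c) (b - c) * of_coords (a + b + 2*c) (c - b) (-b)"])
       (use norm_form_conjugates[of a b c] in \<open>auto simp: x mult.assoc intro!: OK_mult\<close>)
qed

definition norm_form_real :: "real \<Rightarrow> real \<Rightarrow> real \<Rightarrow> real" where
  "norm_form_real a b c =
     a^3 - a^2*b + 5*a^2*c - 2*a*b^2 - a*b*c + 6*a*c^2 + b^3 - b^2*c - 2*b*c^2 + c^3"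

definition trace_form :: "real \<Rightarrow> real \<Rightarrow> real \<Rightarrow> real" where
  "trace_form a b c = 3*a^2 - 2*a*b + 10*a*c + 5*b^2 - 8*b*c + 13*c^2"

lemma of_int_norm_form: "real_of_int (norm_form a b c) = norm_form_real a b c"
  unfolding norm_form_def norm_form_real_def by simp

lemma norm_form_real_scale: "norm_form_real (n*a) (n*b) (n*c) = n^3 * norm_form_real a b c"
  unfolding norm_form_real_def by (simp add: algebra_simps power2_eq_square power3_eq_cube)

lemma AM_GM_3:
  fixes x y z :: real
  assumes "0 \<le> x" "0 \<le> y" "0 \<le> z"
  shows "27*x*y*z \<le> (x+y+z)^3"
proof -
  have id: "2*((x+y+z)^3 - 27*x*y*z) = (x+y+z)*((x-y)^2+(y-z)^2+(z-x)^2)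
      + 6*(x*(y-z)^2 + y*(z-x)^2 + z*(x-y)^2)"
    by algebra
  have "0 \<le> (x+y+z)*((x-y)^2+(y-z)^2+(z-x)^2)" "0 \<le> x*(y-z)^2 + y*(z-x)^2 + z*(x-y)^2"
    using assms by simp_all
  hence "0 \<le> 2*((x+y+z)^3 - 27*x*y*z)" unfolding id by simp
  thus ?thesis by simp
qed

text \<open>The trace form is the sum of the squares of the three conjugates, so AM-GM bounds the norm.\<close>

lemma norm_form_real_bound:
  assumes "trace_form a b c < 3"
  shows "\<bar>norm_form_real a b c\<bar> < 1"
proof -
  define L1 where "L1 = a + b*w + c*w^2"
  define L2 where "L2 = (a - 2*b + 3*c) + (-c)*w + (b - c)*w^2"
  define L3 where "L3 = (a + b + 2*c) + (c - b)*w + (-b)*w^2"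
  have n: "norm_form_real a b c = L1*L2*L3"
    unfolding norm_form_real_def L1_def L2_def L3_def using w_cubic by algebra
  have q: "trace_form a b c = L1^2 + L2^2 + L3^2"
    unfolding trace_form_def L1_def L2_def L3_def using w_cubic by algebra
  have "27*(L1^2*L2^2*L3^2) \<le> (L1^2 + L2^2 + L3^2)^3"
    using AM_GM_3[of "L1^2" "L2^2" "L3^2"] by (simp add: mult.assoc)
  also have "\<dots> < 3^3" using assms q by (intro power_strict_mono) auto
  finally have "(norm_form_real a b c)^2 < 1" unfolding n by (simp add: power_mult_distrib)
  thus ?thesis by (simp add: abs_less_iff power2_less_1_iff)
qed

definition clustered_mod_1 :: "real \<Rightarrow> real \<Rightarrow> real \<Rightarrow> bool" where
  "clustered_mod_1 x y z \<longleftrightarrow> (\<exists>(s1::int) (s2::int) (s3::int) L.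
     L \<le> x + s1 \<and> x + s1 \<le> L + 2/3 \<and> L \<le> y + s2 \<and> y + s2 \<le> L + 2/3 \<and>
     L \<le> z + s3 \<and> z + s3 \<le> L + 2/3)"

lemma clustered_mod_1_swap12: "clustered_mod_1 x y z \<Longrightarrow> clustered_mod_1 y x z"
  unfolding clustered_mod_1_def by blast

lemma clustered_mod_1_swap23: "clustered_mod_1 x y z \<Longrightarrow> clustered_mod_1 x z y"
  unfolding clustered_mod_1_def
  by (elim exE conjE) (intro exI conjI; assumption)

text \<open>Three points of \<open>[0,1)\<close>, viewed on the circle \<open>\<real>/\<int>\<close>, leave a gap of length at least \<open>1/3\<close>.\<close>

lemma clustered_mod_1_sorted:
  assumes "0 \<le> x" "x \<le> y" "y \<le> z" "z < 1"
  shows "clustered_mod_1 x y z"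
proof (cases "z - x \<le> 2/3")
  case True
  thus ?thesis unfolding clustered_mod_1_def using assms by (intro exI[of _ 0] exI[of _ x]) auto
next
  case False
  show ?thesis
  proof (cases "y - x \<ge> 1/3")
    case True
    thus ?thesis unfolding clustered_mod_1_def using assms
      by (intro exI[of _ 1] exI[of _ 0] exI[of _ 0] exI[of _ y]) auto
  next
    case _: False
    thus ?thesis unfolding clustered_mod_1_def using assms \<open>\<not> z - x \<le> 2/3\<close>
      by (intro exI[of _ 1] exI[of _ 1] exI[of _ 0] exI[of _ z]) auto
  qed
qed

lemma clustered_mod_1: "clustered_mod_1 x y z"
proof -
  have "clustered_mod_1 (frac x) (frac y) (frac z)"
  proof -
    have "frac x \<le> frac y \<and> frac y \<le> frac z \<or> frac x \<le> frac z \<and> frac z \<le> frac y \<or>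
          frac y \<le> frac x \<and> frac x \<le> frac z \<or> frac y \<le> frac z \<and> frac z \<le> frac x \<or>
          frac z \<le> frac x \<and> frac x \<le> frac y \<or> frac z \<le> frac y \<and> frac y \<le> frac x"
      by linarith
    moreover have "0 \<le> frac x" "frac x < 1" "0 \<le> frac y" "frac y < 1" "0 \<le> frac z" "frac z < 1"
      by (simp_all add: frac_lt_1)
    ultimately show ?thesis
      using clustered_mod_1_sorted clustered_mod_1_swap12 clustered_mod_1_swap23 by meson
  qed
  then obtain s1 s2 s3 :: int and L where
    "L \<le> frac x + s1" "frac x + s1 \<le> L + 2/3" "L \<le> frac y + s2" "frac y + s2 \<le> L + 2/3"
    "L \<le> frac z + s3" "frac z + s3 \<le> L + 2/3"
    unfolding clustered_mod_1_def by blast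
  thus ?thesis unfolding clustered_mod_1_def frac_def
    by (intro exI[of _ "s1 - \<lfloor>x\<rfloor>"] exI[of _ "s2 - \<lfloor>y\<rfloor>"] exI[of _ "s3 - \<lfloor>z\<rfloor>"] exI[of _ L])
       simp
qed

definition trace_form_u :: "real \<Rightarrow> real \<Rightarrow> real \<Rightarrow> real" where
  "trace_form_u x y z = 7*(x^2+y^2+z^2) - 2*(x+y+z)^2"

lemma trace_form_eq_trace_form_u: "trace_form a b c = trace_form_u (-a + b - 2*c) (-a - c) (-a - 2*c)"
  unfolding trace_form_def trace_form_u_def by (simp add: algebra_simps power2_eq_square)

lemma trace_form_u_shift_lt_3:
  fixes t1 t2 t3 L :: real
  assumes "L \<le> t1" "t1 \<le> L + 2/3" "L \<le> t2" "t2 \<le> L + 2/3" "L \<le> t3" "t3 \<le> L + 2/3"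
  shows "\<exists>k::int. trace_form_u (t1 - k) (t2 - k) (t3 - k) < 3"
proof -
  define s where "s = (t1+t2+t3)/3"
  define k where "k = \<lfloor>s + 1/2\<rfloor>"
  define d where "d = s - k"
  have "\<bar>d\<bar> \<le> 1/2" unfolding d_def k_def by linarith
  hence d: "d^2 \<le> 1/4" using power_mono[of "\<bar>d\<bar>" "1/2" 2] by (simp add: power2_eq_square)
  define P where "P = (t1-t2)^2 + (t2-t3)^2 + (t1-t3)^2"
  have sq: "(u - v)^2 \<le> 2/3 * \<bar>u - v\<bar>" if "\<bar>u - v\<bar> \<le> 2/3" for u v :: real
    using mult_right_mono[OF that abs_ge_zero[of "u - v"]] by (simp add: power2_eq_square)
  have "\<bar>t1 - t2\<bar> \<le> 2/3" "\<bar>t2 - t3\<bar> \<le> 2/3" "\<bar>t1 - t3\<bar> \<le> 2/3"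
    using assms unfolding abs_le_iff by linarith+
  hence "P \<le> 2/3 * (\<bar>t1-t2\<bar> + \<bar>t2-t3\<bar> + \<bar>t1-t3\<bar>)"
    unfolding P_def distrib_left using sq by (intro add_mono) auto
  also have "\<dots> \<le> 2/3 * (4/3)" using assms by (simp add: abs_if)
  finally have "P \<le> 8/9" by simp
  moreover have "trace_form_u (t1 - k) (t2 - k) (t3 - k) = 3*d^2 + 7/3*P"
    unfolding trace_form_u_def P_def d_def s_def by (simp add: field_simps power2_eq_square)
  ultimately show ?thesis using d by (intro exI[of _ k]) linarith
qed

lemma trace_form_covering: "\<exists>(q1::int) (q2::int) (q3::int). trace_form (a - q1) (b - q2) (c - q3) < 3"
proof -
  define u1 where "u1 = -a + b - 2*c"
  define u2 where "u2 = -a - c"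
  define u3 where "u3 = -a - 2*c"
  obtain s1 s2 s3 :: int and L where
    "L \<le> u1 + s1" "u1 + s1 \<le> L + 2/3" "L \<le> u2 + s2" "u2 + s2 \<le> L + 2/3"
    "L \<le> u3 + s3" "u3 + s3 \<le> L + 2/3"
    using clustered_mod_1[of u1 u2 u3] unfolding clustered_mod_1_def by blast
  then obtain k :: int where k: "trace_form_u (u1 + s1 - k) (u2 + s2 - k) (u3 + s3 - k) < 3"
    using trace_form_u_shift_lt_3 by blast
  define n1 where "n1 = k - s1"
  define n2 where "n2 = k - s2"
  define n3 where "n3 = k - s3"
  have "trace_form (a - of_int (n3 - 2*n2)) (b - of_int (n1 - n3)) (c - of_int (n2 - n3))
        = trace_form_u (u1 + s1 - k) (u2 + s2 - k) (u3 + s3 - k)"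
    unfolding trace_form_eq_trace_form_u n1_def n2_def n3_def u1_def u2_def u3_def
    by (simp add: algebra_simps)
  hence "trace_form (a - of_int (n3 - 2*n2)) (b - of_int (n1 - n3)) (c - of_int (n2 - n3)) < 3"
    using k by simp
  thus ?thesis by blast
qed

lemma OK_euclidean:
  assumes "x \<in> OK" "y \<in> OK" "y \<noteq> 0"
  shows "\<exists>q\<in>OK. \<bar>normO (x - q*y)\<bar> < \<bar>normO y\<bar>"
proof -
  define n where "n = normO y"
  have n0: "n \<noteq> 0" using normO_eq_0_iff[OF assms(2)] assms(3) unfolding n_def by simp
  obtain y' where y': "y' \<in> OK" "y * y' = of_int n"
    using OK_mult_eq_normO[OF assms(2)] unfolding n_def by blast
  have "normO y * normO y' = n^3" using normO_mult[OF assms(2) y'(1)] y'(2) normO_of_int by simp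
  hence ny': "normO y' = n^2" using n0 unfolding n_def by (simp add: power2_eq_square power3_eq_cube)
  obtain a b c where z: "x * y' = of_coords a b c" using OK_mult[OF assms(1) y'(1)] by (rule OK_E)
  obtain q1 q2 q3 :: int where qc: "trace_form (a/n - q1) (b/n - q2) (c/n - q3) < 3"
    using trace_form_covering by blast
  define q where "q = of_coords q1 q2 q3"
  \<comment> \<open>\<open>q\<close> approximates \<open>x / y = x y' / n\<close>.\<close>
  have "(x - q*y) * y' = of_coords a b c - q * of_int n"
    using z y'(2) by (simp add: algebra_simps)
  also have "\<dots> = of_coords (a - n*q1) (b - n*q2) (c - n*q3)"
    unfolding q_def of_coords_def by (simp add: algebra_simps)
  finally have e: "(x - q*y) * y' = of_coords (a - n*q1) (b - n*q2) (c - n*q3)" .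
  have xq: "x - q*y \<in> OK" using assms unfolding q_def by (intro OK_diff OK_mult) auto
  have "real_of_int (normO (x - q*y) * n^2) = real_of_int (norm_form (a - n*q1) (b - n*q2) (c - n*q3))"
    using normO_mult[OF xq y'(1)] e ny' by simp
  also have "\<dots> = norm_form_real (n * (a/n - q1)) (n * (b/n - q2)) (n * (c/n - q3))"
    unfolding of_int_norm_form using n0 by (simp add: algebra_simps)
  also have "\<dots> = n^3 * norm_form_real (a/n - q1) (b/n - q2) (c/n - q3)"
    by (simp add: norm_form_real_scale)
  finally have "real_of_int (normO (x - q*y)) = n * norm_form_real (a/n - q1) (b/n - q2) (c/n - q3)"
    using n0 by (simp add: power2_eq_square power3_eq_cube algebra_simps)
  hence "\<bar>real_of_int (normO (x - q*y))\<bar> < \<bar>real_of_int n\<bar>"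
    using norm_form_real_bound[OF qc] n0 by (simp add: abs_mult)
  hence "\<bar>normO (x - q*y)\<bar> < \<bar>n\<bar>" by linarith
  thus ?thesis unfolding n_def q_def by (blast intro: of_coords_in_OK)
qed

lemma OK_bezout:
  assumes "x \<in> OK" "y \<in> OK"
  shows "\<exists>d\<in>OK. \<exists>\<alpha>\<in>OK. \<exists>\<beta>\<in>OK. \<exists>u\<in>OK. \<exists>v\<in>OK. d = \<alpha>*x + \<beta>*y \<and> x = u*d \<and> y = v*d"
  using assms
proof (induction "nat \<bar>normO y\<bar>" arbitrary: x y rule: less_induct)
  case less
  show ?case
  proof (cases "y = 0")
    case True
    show ?thesis
      by (rule bexI[of _ x], rule bexI[of _ 1], rule bexI[of _ 0], rule bexI[of _ 1], rule bexI[of _ 0])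
         (use True less.prems in auto)
  next
    case False
    obtain q where q: "q \<in> OK" "\<bar>normO (x - q*y)\<bar> < \<bar>normO y\<bar>"
      using OK_euclidean[OF less.prems False] by blast
    define r where "r = x - q*y"
    have r: "r \<in> OK" using q(1) less.prems unfolding r_def by (intro OK_diff OK_mult)
    have "nat \<bar>normO r\<bar> < nat \<bar>normO y\<bar>" using q(2) unfolding r_def by simp
    then obtain d \<alpha> \<beta> u v where h: "d \<in> OK" "\<alpha> \<in> OK" "\<beta> \<in> OK" "u \<in> OK" "v \<in> OK"
      "d = \<alpha>*y + \<beta>*r" "y = u*d" "r = v*d"
      using less.hyps[OF _ less.prems(2) r] by blast
    have eq_d: "d = \<beta>*x + (\<alpha> - \<beta>*q)*y" using h(6) unfolding r_def by (simp add: algebra_simps)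
    have eq_x: "x = (v + q*u)*d" using h(7,8) unfolding r_def by (simp add: algebra_simps)
    have mem: "\<alpha> - \<beta>*q \<in> OK" "v + q*u \<in> OK"
      using h(2-5) q(1) by (auto intro: OK_diff OK_add OK_mult)
    show ?thesis
      by (rule bexI[of _ d], rule bexI[of _ \<beta>], rule bexI[of _ "\<alpha> - \<beta>*q"],
          rule bexI[of _ "v + q*u"], rule bexI[of _ u], intro conjI)
         (fact eq_d eq_x h mem)+
  qed
qed

lemma of_rat_quotient_of:
  assumes "quotient_of r = (p, q)" shows "(of_rat r :: real) = of_int p / of_int q"
  using quotient_of_div[OF assms] by (simp add: of_rat_divide)

lemma KK_iff: "k \<in> KK \<longleftrightarrow> (\<exists>m::int. m > 0 \<and> of_int m * k \<in> OK)"
proof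
  assume "k \<in> KK"
  then obtain a b c where k: "k = of_rat a + of_rat b * w + of_rat c * w^2" unfolding KK_def by blast
  obtain pa qa where a: "quotient_of a = (pa, qa)" by force
  obtain pb qb where b: "quotient_of b = (pb, qb)" by force
  obtain pc qc where c: "quotient_of c = (pc, qc)" by force
  have pos: "qa > 0" "qb > 0" "qc > 0" using a b c quotient_of_denom_pos by blast+
  have "of_int (qa*qb*qc) * k = of_coords (pa*qb*qc) (pb*qa*qc) (pc*qa*qb)"
    unfolding k of_coords_def of_rat_quotient_of[OF a] of_rat_quotient_of[OF b] of_rat_quotient_of[OF c]
    using pos by (simp add: field_simps)
  moreover have "qa*qb*qc > 0" using pos by simp
  ultimately show "\<exists>m::int. m > 0 \<and> of_int m * k \<in> OK" by (metis of_coords_in_OK)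
next
  assume "\<exists>m::int. m > 0 \<and> of_int m * k \<in> OK"
  then obtain m a b c where m: "m > 0" "of_int m * k = of_coords a b c" by (metis OK_E)
  have "k = of_coords a b c / of_int m" using m by (simp add: field_simps)
  hence "k = of_rat (of_int a / of_int m) + of_rat (of_int b / of_int m) * w + of_rat (of_int c / of_int m) * w^2"
    unfolding of_coords_def by (simp add: of_rat_divide add_divide_distrib)
  thus "k \<in> KK" unfolding KK_def by blast
qed

lemma OK_subset_KK: "x \<in> OK \<Longrightarrow> x \<in> KK"
  unfolding KK_iff by (intro exI[of _ 1]) auto

lemma KK_of_int [simp]: "of_int n \<in> KK" and KK_of_nat [simp]: "of_nat m \<in> KK"
  and KK_0 [simp]: "0 \<in> KK" and KK_1 [simp]: "1 \<in> KK"
  by (simp_all add: OK_subset_KK)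

lemma KK_mult: assumes "x \<in> KK" "y \<in> KK" shows "x * y \<in> KK"
proof -
  obtain m n :: int where "m > 0" "of_int m * x \<in> OK" "n > 0" "of_int n * y \<in> OK"
    using assms unfolding KK_iff by blast
  hence "m*n > 0" "of_int (m*n) * (x*y) \<in> OK"
    using OK_mult[of "of_int m * x" "of_int n * y"] by (auto simp: algebra_simps)
  thus ?thesis unfolding KK_iff by blast
qed

lemma KK_add: assumes "x \<in> KK" "y \<in> KK" shows "x + y \<in> KK"
proof -
  obtain m n :: int where "m > 0" "of_int m * x \<in> OK" "n > 0" "of_int n * y \<in> OK"
    using assms unfolding KK_iff by blast
  hence "m*n > 0" "of_int (m*n) * (x+y) \<in> OK"
    using OK_add[OF OK_mult[of "of_int n" "of_int m * x"] OK_mult[of "of_int m" "of_int n * y"]]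
    by (auto simp: algebra_simps)
  thus ?thesis unfolding KK_iff by blast
qed

lemma inverse_OK_in_KK: assumes "z \<in> OK" "z \<noteq> 0" shows "inverse z \<in> KK"
proof -
  obtain z' where z': "z' \<in> OK" "z * z' = of_int (normO z)" using OK_mult_eq_normO[OF assms(1)] by blast
  define n where "n = normO z"
  have n0: "n \<noteq> 0" using normO_eq_0_iff[OF assms(1)] assms(2) unfolding n_def by simp
  have "of_int \<bar>n\<bar> * inverse z = of_int (sgn n) * z'"
    using z' n0 assms(2) unfolding n_def by (simp add: abs_sgn field_simps)
  hence "of_int \<bar>n\<bar> * inverse z \<in> OK" using z'(1) by (simp add: OK_mult)
  thus ?thesis unfolding KK_iff using n0 by (intro exI[of _ "\<bar>n\<bar>"]) simp
qed

lemma KK_inverse: assumes "k \<in> KK" shows "inverse k \<in> KK"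
proof (cases "k = 0")
  case False
  obtain m :: int where m: "m > 0" "of_int m * k \<in> OK" using assms unfolding KK_iff by blast
  hence "of_int m * inverse (of_int m * k) \<in> KK"
    using inverse_OK_in_KK[OF m(2)] False by (intro KK_mult) auto
  moreover have "of_int m * inverse (of_int m * k) = inverse k" using m(1) by (simp add: field_simps)
  ultimately show ?thesis by metis
qed simp

section \<open>Congruences modulo \<open>p\<close>\<close>

lemma in_p_0 [simp]: "in_p 0"
  unfolding in_p_def by (intro bexI[of _ 0]) auto

lemma in_p_add: "in_p x \<Longrightarrow> in_p y \<Longrightarrow> in_p (x + y)"
  unfolding in_p_def by (auto simp: distrib_left[symmetric] intro: OK_add)

lemma in_p_diff: "in_p x \<Longrightarrow> in_p y \<Longrightarrow> in_p (x - y)"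
  unfolding in_p_def by (auto simp: right_diff_distrib[symmetric] intro: OK_diff)

lemma in_p_mult: "a \<in> OK \<Longrightarrow> in_p x \<Longrightarrow> in_p (a * x)"
  unfolding in_p_def by (auto simp: mult.left_commute intro: OK_mult)

lemma in_p_7: "in_p 7"
proof -
  have "7 = (2 - w) * (w^2 + 3*w + 4)" using w_cubic by algebra
  moreover have "w^2 + 3*w + 4 \<in> OK" by (intro OK_add OK_mult OK_power) auto
  ultimately show ?thesis unfolding in_p_def by blast
qed

lemma not_in_p_1: "\<not> in_p 1"
proof
  assume "in_p 1"
  then obtain a b c where "1 = (2 - w) * of_coords a b c"
    unfolding in_p_def by (auto elim!: OK_E)
  moreover have "2 - w = of_coords 2 (-1) 0" "1 = of_coords 1 0 0" unfolding of_coords_def by simp_all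
  ultimately have "of_coords 1 0 0 = of_coords 2 (-1) 0 * of_coords a b c" by simp
  hence "1 = 2*a - c" "0 = 2*b - a - 2*c" "0 = 3*c - b"
    unfolding of_coords_mult by (auto dest: of_coords_inject)
  hence "7*c = 1" by linarith
  thus False by presburger
qed

lemma units_mod_7: "\<not> 7 dvd (n::int) \<Longrightarrow> \<exists>s\<in>{1,-1}. \<exists>e\<in>{0,1,2::nat}. 7 dvd (s * 2^e * n - 1)"
  by simp presburger

lemma in_p_of_int_iff: "in_p (of_int n) \<longleftrightarrow> 7 dvd n"
proof
  assume n: "in_p (of_int n)"
  show "7 dvd n"
  proof (rule ccontr)
    assume "\<not> 7 dvd n"
    then obtain v :: int where "7 dvd (v*n - 1)" using units_mod_7 by blast
    then obtain k where "v*n - 1 = 7*k" by blast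
    hence "1 = of_int v * of_int n - of_int k * (7::real)" by (simp add: algebra_simps flip: of_int_mult)
    moreover have "in_p (of_int v * of_int n - of_int k * 7)"
      using n in_p_7 by (intro in_p_diff in_p_mult) auto
    ultimately show False using not_in_p_1 by simp
  qed
next
  assume "7 dvd n"
  then obtain k where "n = 7 * k" by blast
  thus "in_p (of_int n)" using in_p_mult[OF OK_of_int in_p_7, of k] by (simp add: mult.commute)
qed

definition cong_p :: "real \<Rightarrow> real \<Rightarrow> bool" where
  "cong_p x y \<longleftrightarrow> in_p (x - y)"

lemma cong_p_refl: "cong_p x x"
  by (simp add: cong_p_def)

lemma cong_p_trans [trans]: "cong_p x y \<Longrightarrow> cong_p y z \<Longrightarrow> cong_p x z"
  unfolding cong_p_def using in_p_add by fastforce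

lemma cong_p_add: "cong_p x x' \<Longrightarrow> cong_p y y' \<Longrightarrow> cong_p (x + y) (x' + y')"
  unfolding cong_p_def using in_p_add by (fastforce simp: algebra_simps)

lemma cong_p_diff: "cong_p x x' \<Longrightarrow> cong_p y y' \<Longrightarrow> cong_p (x - y) (x' - y')"
  unfolding cong_p_def using in_p_diff by (fastforce simp: algebra_simps)

lemma cong_p_uminus: "cong_p x y \<Longrightarrow> cong_p (- x) (- y)"
  using cong_p_diff[OF cong_p_refl[of 0]] by simp

lemma cong_p_mult:
  assumes "x \<in> OK" "y' \<in> OK" "cong_p x x'" "cong_p y y'"
  shows "cong_p (x * y) (x' * y')"
proof -
  have "x * y - x' * y' = x * (y - y') + y' * (x - x')" by (simp add: algebra_simps)
  thus ?thesis using assms unfolding cong_p_def by (simp add: in_p_add in_p_mult)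
qed

lemma cong_p_power:
  assumes "x \<in> OK" "x' \<in> OK" "cong_p x x'"
  shows "cong_p (x ^ n) (x' ^ n)"
  by (induction n) (simp_all add: cong_p_refl cong_p_mult OK_power assms)

lemma cong_p_of_int_iff: "cong_p (of_int m) (of_int n) \<longleftrightarrow> 7 dvd (m - n)"
  unfolding cong_p_def using in_p_of_int_iff[of "m - n"] by simp

lemma cong_p_w_2: "cong_p w 2"
  unfolding cong_p_def in_p_def by (intro bexI[of _ "-1"]) (auto intro: OK_minus)

lemma OK_residue:
  assumes "x \<in> OK" shows "\<exists>n::int. 0 \<le> n \<and> n < 7 \<and> cong_p x (of_int n)"
proof -
  obtain a b c where x: "x = of_coords a b c" using assms by (rule OK_E)
  have "cong_p x (of_int a + of_int b * 2 + of_int c * 2^2)"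
    unfolding x of_coords_def
    by (intro cong_p_add cong_p_mult cong_p_power cong_p_w_2 cong_p_refl) auto
  also have "of_int a + of_int b * 2 + of_int c * 2^2 = (of_int (a + 2*b + 4*c) :: real)" by simp
  also have "cong_p \<dots> (of_int ((a + 2*b + 4*c) mod 7))"
    unfolding cong_p_of_int_iff by (simp add: minus_mod_eq_mult_div)
  finally show ?thesis by (metis pos_mod_sign pos_mod_bound zero_less_numeral)
qed

text \<open>The units \<open>\<plusminus>w\<^sup>e\<close> reduce to \<open>\<plusminus>2\<^sup>e\<close> modulo \<open>p\<close>, and these exhaust \<open>\<bbbF>\<^sub>7\<^sup>*\<close>.\<close>

lemma unit_inverse_mod_p:
  assumes x: "x \<in> OK" and "\<not> in_p x"
  shows "\<exists>u\<in>OK. \<exists>u'\<in>OK. u * u' = 1 \<and> cong_p (u * x) 1"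
proof -
  obtain n :: int where n: "cong_p x (of_int n)" using OK_residue[OF x] by blast
  have "\<not> 7 dvd n"
  proof
    assume "7 dvd n"
    hence "in_p (x - of_int n + of_int n)"
      using n in_p_of_int_iff[of n] unfolding cong_p_def by (blast intro: in_p_add)
    thus False using \<open>\<not> in_p x\<close> by simp
  qed
  then obtain s :: int and e :: nat where s: "s \<in> {1,-1}" and e: "7 dvd (s * 2^e * n - 1)"
    using units_mod_7 by blast
  define u where "u = of_int s * w^e"
  define u' where "u' = of_int s * (w^2 + w - 2)^e"
  have "w * (w^2 + w - 2) = 1" using w_cubic by algebra
  hence "u * u' = of_int (s * s)" unfolding u_def u'_def by (simp add: algebra_simps flip: power_mult_distrib)
  hence "u * u' = 1" using s by auto
  moreover have "cong_p (u * x) (of_int s * 2^e * of_int n)"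
    unfolding u_def using x n
    by (intro cong_p_mult cong_p_power cong_p_w_2 cong_p_refl) (auto intro!: OK_mult OK_power)
  moreover have "cong_p (of_int s * 2^e * of_int n) 1"
    using cong_p_of_int_iff[of "s * 2^e * n" 1] e by simp
  moreover have "u \<in> OK" "u' \<in> OK" unfolding u_def u'_def by (auto intro!: OK_mult OK_power OK_add OK_diff)
  ultimately show ?thesis by (blast intro: cong_p_trans)
qed

section \<open>The groups \<open>SL\<^sub>2(\<O>)\<close> and \<open>\<Gamma>(p)\<close>\<close>

type_synonym mat = "real \<times> real \<times> real \<times> real"

fun mat_mult :: "mat \<Rightarrow> mat \<Rightarrow> mat" where
  "mat_mult (a,b,c,d) (a',b',c',d') = (a*a' + b*c', a*b' + b*d', c*a' + d*c', c*b' + d*d')"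

fun mat_adj :: "mat \<Rightarrow> mat" where
  "mat_adj (a,b,c,d) = (d, -b, -c, a)"

definition mat_1 :: mat where
  "mat_1 = (1,0,0,1)"

fun mat_cong :: "mat \<Rightarrow> mat \<Rightarrow> bool" where
  "mat_cong (a,b,c,d) (a',b',c',d') \<longleftrightarrow> cong_p a a' \<and> cong_p b b' \<and> cong_p c c' \<and> cong_p d d'"

lemma SL2O_iff: "(a,b,c,d) \<in> SL2O \<longleftrightarrow> a \<in> OK \<and> b \<in> OK \<and> c \<in> OK \<and> d \<in> OK \<and> a*d - b*c = 1"
  unfolding SL2O_def by simp

lemma mvec_mat_mult: "mvec (mat_mult g h) v = mvec g (mvec h v)"
  by (cases g rule: prod_cases4, cases h rule: prod_cases4, cases v) (simp add: algebra_simps)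

lemma mvec_mat_1: "mvec mat_1 v = v"
  by (cases v) (simp add: mat_1_def)

lemma mat_mult_1_right: "mat_mult g mat_1 = g"
  by (cases g rule: prod_cases4) (simp add: mat_1_def)

lemma mat_mult_mat_1: "mat_mult mat_1 mat_1 = mat_1" and mat_adj_mat_1: "mat_adj mat_1 = mat_1"
  by (simp_all add: mat_1_def)

lemma mat_adj_adj: "mat_adj (mat_adj g) = g"
  by (cases g rule: prod_cases4) simp

lemma mat_mult_adj: "g \<in> SL2O \<Longrightarrow> mat_mult g (mat_adj g) = mat_1"
  and mat_adj_mult: "g \<in> SL2O \<Longrightarrow> mat_mult (mat_adj g) g = mat_1"
  by (cases g rule: prod_cases4, auto simp: SL2O_iff mat_1_def algebra_simps)+

lemma SL2O_mat_mult:
  assumes "g \<in> SL2O" "h \<in> SL2O" shows "mat_mult g h \<in> SL2O"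
proof (cases g rule: prod_cases4, cases h rule: prod_cases4)
  fix a b c d a' b' c' d' assume gh: "g = (a,b,c,d)" "h = (a',b',c',d')"
  have "(a*a' + b*c')*(c*b' + d*d') - (a*b' + b*d')*(c*a' + d*c') = (a*d - b*c)*(a'*d' - b'*c')"
    by (simp add: algebra_simps)
  thus ?thesis using assms unfolding gh mat_mult.simps SL2O_iff by (auto intro!: OK_add OK_mult)
qed

lemma SL2O_mat_adj: "g \<in> SL2O \<Longrightarrow> mat_adj g \<in> SL2O"
  by (cases g rule: prod_cases4) (auto simp: SL2O_iff algebra_simps intro: OK_minus)

lemma SL2O_mat_1: "mat_1 \<in> SL2O"
  unfolding mat_1_def SL2O_iff by simp

lemma mat_cong_refl: "mat_cong g g"
  by (cases g rule: prod_cases4) (simp add: cong_p_refl)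

lemma mat_cong_mult:
  assumes "g \<in> SL2O" "h' \<in> SL2O" "mat_cong g g'" "mat_cong h h'"
  shows "mat_cong (mat_mult g h) (mat_mult g' h')"
  using assms
  by (cases g rule: prod_cases4, cases g' rule: prod_cases4, cases h rule: prod_cases4,
      cases h' rule: prod_cases4) (auto simp: SL2O_iff intro!: cong_p_add cong_p_mult)

lemma mat_cong_adj: "mat_cong g g' \<Longrightarrow> mat_cong (mat_adj g) (mat_adj g')"
  by (cases g rule: prod_cases4, cases g' rule: prod_cases4) (auto intro: cong_p_uminus)

lemma Gamma_p_iff: "g \<in> Gamma_p \<longleftrightarrow> g \<in> SL2O \<and> mat_cong g mat_1"
  by (cases g rule: prod_cases4) (simp add: Gamma_p_def mat_1_def cong_p_def)

lemma Gamma_p_SL2O: "g \<in> Gamma_p \<Longrightarrow> g \<in> SL2O"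
  by (simp add: Gamma_p_iff)

lemma Gamma_p_mat_1: "mat_1 \<in> Gamma_p"
  by (simp add: Gamma_p_iff SL2O_mat_1 mat_cong_refl)

lemma Gamma_p_mat_mult: "g \<in> Gamma_p \<Longrightarrow> h \<in> Gamma_p \<Longrightarrow> mat_mult g h \<in> Gamma_p"
  using mat_cong_mult[of g mat_1 mat_1 h] by (simp add: Gamma_p_iff SL2O_mat_mult SL2O_mat_1 mat_mult_mat_1)

lemma Gamma_p_mat_adj: "g \<in> Gamma_p \<Longrightarrow> mat_adj g \<in> Gamma_p"
  using mat_cong_adj[of g mat_1] by (simp add: Gamma_p_iff SL2O_mat_adj mat_adj_mat_1)

lemma Gamma_p_conj:
  assumes g: "g \<in> SL2O" and h: "h \<in> Gamma_p"
  shows "mat_mult (mat_mult g h) (mat_adj g) \<in> Gamma_p"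
proof -
  have hs: "h \<in> SL2O" "mat_cong h mat_1" using h by (simp_all add: Gamma_p_iff)
  have "mat_cong (mat_mult g h) (mat_mult g mat_1)"
    by (rule mat_cong_mult[OF g SL2O_mat_1 mat_cong_refl hs(2)])
  hence "mat_cong (mat_mult (mat_mult g h) (mat_adj g)) (mat_mult (mat_mult g mat_1) (mat_adj g))"
    by (rule mat_cong_mult[OF SL2O_mat_mult[OF g hs(1)] SL2O_mat_adj[OF g] _ mat_cong_refl])
  thus ?thesis using g hs(1)
    by (simp add: Gamma_p_iff mat_mult_1_right mat_mult_adj SL2O_mat_mult SL2O_mat_adj)
qed

section \<open>The action on \<open>\<bbbP>\<^sup>1(K)\<close>\<close>

definition cls :: "real \<times> real \<Rightarrow> (real \<times> real) set" where
  "cls v = proj_rel `` {v}"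

lemma K2nz_iff: "(x,y) \<in> K2nz \<longleftrightarrow> x \<in> KK \<and> y \<in> KK \<and> (x \<noteq> 0 \<or> y \<noteq> 0)"
  unfolding K2nz_def by auto

lemma cls_iff: "(x',y') \<in> cls (x,y) \<longleftrightarrow>
   (x,y) \<in> K2nz \<and> (x',y') \<in> K2nz \<and> (\<exists>k\<in>KK. k \<noteq> 0 \<and> x' = k*x \<and> y' = k*y)"
  unfolding cls_def proj_rel_def by simp

lemma K2nz_scale: "(x,y) \<in> K2nz \<Longrightarrow> k \<in> KK \<Longrightarrow> k \<noteq> 0 \<Longrightarrow> (k*x, k*y) \<in> K2nz"
  unfolding K2nz_iff by (auto intro: KK_mult)

lemma cls_self: "v \<in> K2nz \<Longrightarrow> v \<in> cls v"
  by (cases v) (auto simp: cls_iff intro: bexI[of _ 1])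

lemma cls_scale:
  assumes v: "(x,y) \<in> K2nz" and k: "k \<in> KK" "k \<noteq> 0"
  shows "cls (k*x, k*y) = cls (x,y)"
proof -
  have "(\<exists>k'\<in>KK. k' \<noteq> 0 \<and> p = k'*(k*x) \<and> q = k'*(k*y)) \<longleftrightarrow>
        (\<exists>k'\<in>KK. k' \<noteq> 0 \<and> p = k'*x \<and> q = k'*y)" for p q
  proof
    assume "\<exists>k'\<in>KK. k' \<noteq> 0 \<and> p = k'*(k*x) \<and> q = k'*(k*y)"
    then obtain k' where "k' \<in> KK" "k' \<noteq> 0" "p = k'*(k*x)" "q = k'*(k*y)" by blast
    thus "\<exists>k'\<in>KK. k' \<noteq> 0 \<and> p = k'*x \<and> q = k'*y"
      using k by (intro bexI[of _ "k'*k"]) (auto intro: KK_mult)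
  next
    assume "\<exists>k'\<in>KK. k' \<noteq> 0 \<and> p = k'*x \<and> q = k'*y"
    then obtain k' where "k' \<in> KK" "k' \<noteq> 0" "p = k'*x" "q = k'*y" by blast
    thus "\<exists>k'\<in>KK. k' \<noteq> 0 \<and> p = k'*(k*x) \<and> q = k'*(k*y)"
      using k by (intro bexI[of _ "k' * inverse k"]) (auto intro: KK_mult KK_inverse)
  qed
  thus ?thesis using v K2nz_scale[OF v k] by (auto simp: cls_iff)
qed

lemma cls_eq: "(x,y) \<in> K2nz \<Longrightarrow> cls (x,y) = (\<lambda>k. (k*x, k*y)) ` (KK - {0})"
  using K2nz_scale[of x y] by (fastforce simp: cls_iff image_iff)

lemma P1K_iff: "P \<in> P1K \<longleftrightarrow> (\<exists>v\<in>K2nz. P = cls v)"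
  unfolding P1K_def quotient_def cls_def by blast

lemma mvec_K2nz:
  assumes g: "g \<in> SL2O" and v: "v \<in> K2nz"
  shows "mvec g v \<in> K2nz"
proof (cases g rule: prod_cases4, cases v)
  fix a b c d x y assume gv: "g = (a,b,c,d)" "v = (x,y)"
  have ok: "a \<in> KK" "b \<in> KK" "c \<in> KK" "d \<in> KK" and det: "a*d - b*c = 1"
    using g unfolding gv SL2O_iff by (auto intro: OK_subset_KK)
  have xy: "x \<in> KK" "y \<in> KK" "x \<noteq> 0 \<or> y \<noteq> 0" using v unfolding gv K2nz_iff by auto
  have "x = d*(a*x + b*y) - b*(c*x + d*y)" "y = a*(c*x + d*y) - c*(a*x + b*y)"
    using det by algebra+
  hence "a*x + b*y \<noteq> 0 \<or> c*x + d*y \<noteq> 0" using xy(3) by auto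
  thus ?thesis unfolding gv mvec.simps K2nz_iff using ok xy by (auto intro!: KK_add KK_mult)
qed

lemma act_cls:
  assumes g: "g \<in> SL2O" and v: "v \<in> K2nz"
  shows "act g (cls v) = cls (mvec g v)"
proof (cases g rule: prod_cases4, cases v, cases "mvec g v")
  fix a b c d x y X Y assume gv: "g = (a,b,c,d)" "v = (x,y)" "mvec g v = (X,Y)"
  have "mvec g (k*x, k*y) = (k*X, k*Y)" for k
    using gv(3) unfolding gv(1,2) by (auto simp: algebra_simps)
  hence "act g (cls v) = (\<lambda>k. (k*X, k*Y)) ` (KK - {0})"
    unfolding act_def gv(2) cls_eq[OF v[unfolded gv(2)]] image_image by simp
  also have "\<dots> = cls (mvec g v)"
    using cls_eq mvec_K2nz[OF g v] unfolding gv(3) by simp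
  finally show ?thesis .
qed

lemma act_mat_mult: "act (mat_mult g h) P = act g (act h P)"
  unfolding act_def by (simp add: image_image mvec_mat_mult)

lemma act_mat_1: "act mat_1 P = P"
  unfolding act_def by (simp add: mvec_mat_1)

lemma act_mat_adj_act: "g \<in> SL2O \<Longrightarrow> act (mat_adj g) (act g P) = P"
  by (metis act_mat_mult mat_adj_mult act_mat_1)

lemma act_act_mat_adj: "g \<in> SL2O \<Longrightarrow> act g (act (mat_adj g) P) = P"
  by (metis act_mat_mult mat_mult_adj act_mat_1)

lemma act_P1K: assumes "g \<in> SL2O" "P \<in> P1K" shows "act g P \<in> P1K"
  using assms act_cls mvec_K2nz unfolding P1K_iff by metis

lemma cusp_rel_iff: "(P,Q) \<in> cusp_rel \<longleftrightarrow> P \<in> P1K \<and> Q \<in> P1K \<and> (\<exists>g\<in>Gamma_p. Q = act g P)"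
  unfolding cusp_rel_def by simp

lemma equiv_cusp_rel: "equiv P1K cusp_rel"
proof (rule equivI)
  show "cusp_rel \<subseteq> P1K \<times> P1K" unfolding cusp_rel_def by auto
  show "refl_on P1K cusp_rel"
    by (rule refl_onI) (metis cusp_rel_iff Gamma_p_mat_1 act_mat_1)
  show "sym cusp_rel"
  proof (rule symI)
    fix P Q assume "(P,Q) \<in> cusp_rel"
    then obtain g where g: "P \<in> P1K" "Q \<in> P1K" "g \<in> Gamma_p" "Q = act g P" unfolding cusp_rel_iff by blast
    hence "P = act (mat_adj g) Q" using act_mat_adj_act[OF Gamma_p_SL2O] by simp
    thus "(Q,P) \<in> cusp_rel" unfolding cusp_rel_iff using g Gamma_p_mat_adj by blast
  qed
  show "trans cusp_rel"
  proof (rule transI)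
    fix P Q R assume "(P,Q) \<in> cusp_rel" "(Q,R) \<in> cusp_rel"
    then obtain g h where g: "P \<in> P1K" "R \<in> P1K" "g \<in> Gamma_p" "h \<in> Gamma_p" "R = act h (act g P)"
      unfolding cusp_rel_iff by blast
    hence "R = act (mat_mult h g) P" by (simp add: act_mat_mult)
    thus "(P,R) \<in> cusp_rel" unfolding cusp_rel_iff using g Gamma_p_mat_mult by blast
  qed
qed

lemma cusp_rel_Image: "P \<in> P1K \<Longrightarrow> cusp_rel `` {P} = (\<lambda>g. act g P) ` Gamma_p"
  using act_P1K[OF Gamma_p_SL2O] by (auto simp: cusp_rel_iff image_iff)

text \<open>Since \<open>\<Gamma>(p)\<close> is normal, \<open>SL\<^sub>2(\<O>)\<close> permutes the \<open>\<Gamma>(p)\<close>-orbits.\<close>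

lemma act_cusp_rel_Image:
  assumes g: "g \<in> SL2O" and P: "P \<in> P1K"
  shows "act g ` (cusp_rel `` {P}) = cusp_rel `` {act g P}"
proof -
  have "act g (act h P) = act (mat_mult (mat_mult g h) (mat_adj g)) (act g P)" for h
    by (simp add: act_mat_mult act_mat_adj_act[OF g])
  moreover have "act e (act g P) = act g (act (mat_mult (mat_mult (mat_adj g) e) (mat_adj (mat_adj g))) P)"
    for e
    by (simp add: act_mat_mult mat_adj_adj act_act_mat_adj[OF g])
  ultimately show ?thesis
    unfolding cusp_rel_Image[OF P] cusp_rel_Image[OF act_P1K[OF g P]] image_image
    using Gamma_p_conj[OF g] Gamma_p_conj[OF SL2O_mat_adj[OF g]] by blast
qed

section \<open>Representatives of the cusps\<close>

lemma K2nz_first_column: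
  assumes v: "(x,y) \<in> K2nz"
  shows "\<exists>a b c d. (a,b,c,d) \<in> SL2O \<and> cls (x,y) = cls (a,c)"
proof -
  have xy: "x \<in> KK" "y \<in> KK" using v unfolding K2nz_iff by auto
  obtain m1 :: int where m1: "m1 > 0" "of_int m1 * x \<in> OK" using xy(1) unfolding KK_iff by blast
  obtain m2 :: int where m2: "m2 > 0" "of_int m2 * y \<in> OK" using xy(2) unfolding KK_iff by blast
  define m where "m = (of_int (m1 * m2) :: real)"
  have m: "m \<in> KK" "m \<noteq> 0" unfolding m_def using m1(1) m2(1) by (simp only: KK_of_int, simp)
  have x0: "m * x \<in> OK" using OK_mult[OF OK_of_int[of m2] m1(2)] unfolding m_def by (simp add: algebra_simps)
  have y0: "m * y \<in> OK" using OK_mult[OF OK_of_int[of m1] m2(2)] unfolding m_def by (simp add: algebra_simps)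
  obtain \<delta> \<alpha> \<beta> u v where b: "\<delta> \<in> OK" "\<alpha> \<in> OK" "\<beta> \<in> OK" "u \<in> OK" "v \<in> OK"
    "\<delta> = \<alpha>*(m*x) + \<beta>*(m*y)" "m*x = u*\<delta>" "m*y = v*\<delta>"
    using OK_bezout[OF x0 y0] by blast
  have "(\<alpha>*u + \<beta>*v - 1) * \<delta> = 0" using b(6-8) by algebra
  moreover have "\<delta> \<noteq> 0" using b(7,8) K2nz_scale[OF v m] by (auto simp: K2nz_iff)
  ultimately have det: "\<alpha>*u + \<beta>*v = 1" by simp
  hence uv: "(u,v) \<in> K2nz" using b(4,5) unfolding K2nz_iff by (auto intro: OK_subset_KK)
  have "cls (x,y) = cls (m*x, m*y)" using cls_scale[OF v m] by simp
  also have "\<dots> = cls (u,v)"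
    using cls_scale[OF uv OK_subset_KK[OF b(1)] \<open>\<delta> \<noteq> 0\<close>] b(7,8) by (simp add: mult.commute)
  finally have "cls (x,y) = cls (u,v)" .
  moreover have "(u, -\<beta>, v, \<alpha>) \<in> SL2O"
    using b(2-5) det unfolding SL2O_iff by (auto intro: OK_minus simp: algebra_simps)
  ultimately show ?thesis by blast
qed

lemma P1K_first_column: "P \<in> P1K \<Longrightarrow> \<exists>a b c d. (a,b,c,d) \<in> SL2O \<and> P = cls (a,c)"
  unfolding P1K_iff using K2nz_first_column by fastforce

lemma SL2O_transitive_P1K:
  assumes "P \<in> P1K" "Q \<in> P1K" shows "\<exists>g\<in>SL2O. act g P = Q"
proof -
  have "\<exists>g\<in>SL2O. R = act g (cls (1,0))" if R: "R \<in> P1K" for R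
  proof -
    obtain a b c d where g: "(a,b,c,d) \<in> SL2O" "R = cls (a,c)" using P1K_first_column[OF R] by blast
    moreover have "(1,0) \<in> K2nz" by (simp add: K2nz_iff)
    ultimately show ?thesis using act_cls[OF g(1)] by force
  qed
  then obtain g h where "g \<in> SL2O" "P = act g (cls (1,0))" "h \<in> SL2O" "Q = act h (cls (1,0))"
    using assms by meson
  thus ?thesis
    by (intro bexI[of _ "mat_mult h (mat_adj g)"]) (simp_all add: act_mat_mult act_mat_adj_act SL2O_mat_mult SL2O_mat_adj)
qed

definition rep :: "nat \<Rightarrow> real \<times> real" where
  "rep j = (if j < 7 then (of_nat j, 1) else (1, 0))"

definition rep_mat :: "nat \<Rightarrow> mat" where
  "rep_mat j = (if j < 7 then (of_nat j, -1, 1, 0) else mat_1)"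

lemma rep_in_OK: "fst (rep j) \<in> OK" "snd (rep j) \<in> OK"
  by (simp_all add: rep_def)

lemma rep_K2nz: "rep j \<in> K2nz"
  by (simp add: rep_def K2nz_iff)

lemma SL2O_rep_mat: "rep_mat j \<in> SL2O"
  using SL2O_mat_1 by (auto simp: rep_mat_def SL2O_iff intro: OK_minus)

lemma mvec_rep_mat: "mvec (rep_mat j) (1,0) = rep j"
  by (simp add: rep_mat_def rep_def mat_1_def)

lemma SL2O_unit_scale:
  assumes "(a,b,c,d) \<in> SL2O" "u \<in> OK" "u' \<in> OK" "u * u' = 1"
  shows "(u*a, u'*b, u*c, u'*d) \<in> SL2O"
proof -
  have "(u*a)*(u'*d) - (u'*b)*(u*c) = (u*u')*(a*d - b*c)" by (simp add: algebra_simps)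
  thus ?thesis using assms unfolding SL2O_iff by (auto intro: OK_mult)
qed

lemma P1K_first_column_cong_rep:
  assumes "P \<in> P1K"
  shows "\<exists>a b c d j. (a,b,c,d) \<in> SL2O \<and> P = cls (a,c) \<and> j < 8 \<and>
    cong_p a (fst (rep j)) \<and> cong_p c (snd (rep j))"
proof -
  obtain a b c d where g: "(a,b,c,d) \<in> SL2O" "P = cls (a,c)" using P1K_first_column[OF assms] by blast
  have ok: "a \<in> OK" "b \<in> OK" "c \<in> OK" "d \<in> OK" "a*d - b*c = 1" using g(1) unfolding SL2O_iff by auto
  have ac: "(a,c) \<in> K2nz" using mvec_K2nz[OF g(1), of "(1,0)"] by (simp add: K2nz_iff)
  have scaled: "(u*a, u'*b, u*c, u'*d) \<in> SL2O \<and> P = cls (u*a, u*c)"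
    if "u \<in> OK" "u' \<in> OK" "u * u' = 1" for u u'
    using SL2O_unit_scale[OF g(1) that] cls_scale[OF ac OK_subset_KK[OF that(1)]] that(3) g(2)
    by (metis mult_zero_left zero_neq_one)
  show ?thesis
  proof (cases "in_p c")
    case False
    then obtain u u' where u: "u \<in> OK" "u' \<in> OK" "u * u' = 1" "cong_p (u*c) 1"
      using unit_inverse_mod_p[OF ok(3)] by blast
    obtain n :: int where n: "0 \<le> n" "n < 7" "cong_p (u*a) (of_int n)"
      using OK_residue[OF OK_mult[OF u(1) ok(1)]] by blast
    have "rep (nat n) = (of_int n, 1)" using n(1,2) by (simp add: rep_def)
    hence "nat n < 8 \<and> cong_p (u*a) (fst (rep (nat n))) \<and> cong_p (u*c) (snd (rep (nat n)))"
      using u(4) n by auto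
    thus ?thesis using scaled[OF u(1-3)] by blast
  next
    case True
    have "\<not> in_p a"
    proof
      assume "in_p a"
      hence "in_p (d*a - b*c)" using True ok by (intro in_p_diff in_p_mult)
      thus False using ok(5) not_in_p_1 by (simp add: mult.commute)
    qed
    then obtain u u' where u: "u \<in> OK" "u' \<in> OK" "u * u' = 1" "cong_p (u*a) 1"
      using unit_inverse_mod_p[OF ok(1)] by blast
    have "cong_p (u*c) 0" using in_p_mult[OF u(1) True] by (simp add: cong_p_def)
    hence "7 < (8::nat) \<and> cong_p (u*a) (fst (rep 7)) \<and> cong_p (u*c) (snd (rep 7))"
      using u(4) by (simp add: rep_def)
    thus ?thesis using scaled[OF u(1-3)] by blast
  qed
qed

lemma Gamma_p_first_column_e1:
  assumes g: "g \<in> SL2O" and "cong_p (fst (mvec g (1,0))) 1" "cong_p (snd (mvec g (1,0))) 0"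
  shows "\<exists>\<gamma>\<in>Gamma_p. mvec \<gamma> (1,0) = mvec g (1,0)"
proof (cases g rule: prod_cases4)
  fix a b c d assume gg: "g = (a,b,c,d)"
  have ok: "a \<in> OK" "b \<in> OK" "c \<in> OK" "d \<in> OK" "a*d - b*c = 1" using g unfolding gg SL2O_iff by auto
  have p: "in_p (a - 1)" "in_p c" using assms(2,3) unfolding gg cong_p_def by simp_all
  \<comment> \<open>Right multiplication by \<open>(1, -b; 0, 1)\<close> keeps the first column and corrects the second.\<close>
  have "b - a*b = (-b)*(a - 1)" by algebra
  hence b': "in_p (b - a*b)" using p ok by (simp only:) (intro in_p_mult OK_minus)
  have "d - c*b - 1 = (-d)*(a - 1)" using ok(5) by algebra
  hence d': "in_p (d - c*b - 1)" using p ok by (simp only:) (intro in_p_mult OK_minus)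
  have "a*(d - c*b) - (b - a*b)*c = 1" using ok(5) by algebra
  hence "(a, b - a*b, c, d - c*b) \<in> Gamma_p"
    using ok p b' d' unfolding Gamma_p_def SL2O_iff by (auto intro!: OK_diff OK_mult)
  thus ?thesis unfolding gg by force
qed

lemma Gamma_p_first_column:
  assumes g: "g \<in> SL2O" and h: "h \<in> SL2O" and v: "mvec h (1,0) = v"
    and cong: "cong_p (fst (mvec g (1,0))) (fst v)" "cong_p (snd (mvec g (1,0))) (snd v)"
  shows "\<exists>\<gamma>\<in>Gamma_p. mvec \<gamma> v = mvec g (1,0)"
proof -
  \<comment> \<open>Conjugating by \<open>h\<close> reduces to the case \<open>v = (1,0)\<close>.\<close>
  define u where "u = mat_mult (mat_adj h) g"
  have u: "u \<in> SL2O" unfolding u_def using g h by (intro SL2O_mat_mult SL2O_mat_adj)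
  have "cong_p (fst (mvec u (1,0))) 1 \<and> cong_p (snd (mvec u (1,0))) 0"
  proof (cases g rule: prod_cases4, cases h rule: prod_cases4)
    fix a b c d h1 h2 h3 h4 assume gh: "g = (a,b,c,d)" "h = (h1,h2,h3,h4)"
    have ok: "h1 \<in> OK" "h2 \<in> OK" "h3 \<in> OK" "h4 \<in> OK" and det: "h1*h4 - h2*h3 = 1"
      using h unfolding gh SL2O_iff by auto
    have p: "in_p (a - h1)" "in_p (c - h3)" using cong v unfolding gh cong_p_def by auto
    have "h4*a - h2*c - 1 = h4*(a - h1) - h2*(c - h3)" using det by algebra
    moreover have "h1*c - h3*a = h1*(c - h3) - h3*(a - h1)" by algebra
    ultimately have "in_p (h4*a - h2*c - 1)" "in_p (h1*c - h3*a)" using ok p by (auto intro!: in_p_diff in_p_mult)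
    thus ?thesis unfolding u_def gh cong_p_def by (simp add: algebra_simps)
  qed
  then obtain \<delta> where \<delta>: "\<delta> \<in> Gamma_p" "mvec \<delta> (1,0) = mvec u (1,0)"
    using Gamma_p_first_column_e1[OF u] by blast
  have "mvec (mat_adj h) v = (1,0)"
    unfolding v[symmetric] by (metis mvec_mat_mult mat_adj_mult[OF h] mvec_mat_1)
  hence "mvec (mat_mult (mat_mult h \<delta>) (mat_adj h)) v = mvec h (mvec u (1,0))"
    using \<delta>(2) by (simp add: mvec_mat_mult)
  also have "\<dots> = mvec g (1,0)"
    unfolding u_def mvec_mat_mult by (metis mvec_mat_mult mat_mult_adj[OF h] mvec_mat_1)
  finally show ?thesis using Gamma_p_conj[OF h \<delta>(1)] by blast
qed

lemma P1K_Gamma_p_rep: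
  assumes "P \<in> P1K" shows "\<exists>j<8. \<exists>\<gamma>\<in>Gamma_p. P = act \<gamma> (cls (rep j))"
proof -
  obtain a b c d j where g: "(a,b,c,d) \<in> SL2O" "P = cls (a,c)" "j < 8"
    and cong: "cong_p a (fst (rep j))" "cong_p c (snd (rep j))"
    using P1K_first_column_cong_rep[OF assms] by blast
  have "\<exists>\<gamma>\<in>Gamma_p. mvec \<gamma> (rep j) = (a,c)"
    using Gamma_p_first_column[OF g(1) SL2O_rep_mat mvec_rep_mat] cong by simp
  then obtain \<gamma> where "\<gamma> \<in> Gamma_p" "mvec \<gamma> (rep j) = (a,c)" by blast
  thus ?thesis using act_cls[OF Gamma_p_SL2O rep_K2nz] g(2,3) by metis
qed

lemma Gamma_p_orbit_cross_in_p:
  assumes \<gamma>: "\<gamma> \<in> Gamma_p" and v: "(x,y) \<in> K2nz" "x \<in> OK" "y \<in> OK"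
    and v': "(x',y') \<in> K2nz" "x' \<in> OK" "y' \<in> OK"
    and eq: "act \<gamma> (cls (x,y)) = cls (x',y')"
  shows "in_p (x'*y - y'*x)"
proof (cases \<gamma> rule: prod_cases4)
  fix a b c d assume \<gamma>_def: "\<gamma> = (a,b,c,d)"
  have ok: "a \<in> OK" "b \<in> OK" "c \<in> OK" "d \<in> OK" and p: "in_p (a - 1)" "in_p b" "in_p c" "in_p (d - 1)"
    using \<gamma> unfolding \<gamma>_def Gamma_p_def SL2O_iff by auto
  define X where "X = a*x + b*y"
  define Y where "Y = c*x + d*y"
  have "act \<gamma> (cls (x,y)) = cls (X,Y)"
    using act_cls[OF Gamma_p_SL2O[OF \<gamma>] v(1)] unfolding \<gamma>_def X_def Y_def by simp
  hence "(x',y') \<in> cls (X,Y)" using eq cls_self[OF v'(1)] by simp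
  then obtain k where "x' = k*X" "y' = k*Y" unfolding cls_iff by blast
  hence "x'*y - y'*x = y'*(X - x) - x'*(Y - y)" by (simp add: algebra_simps)
  moreover have "X - x = x*(a - 1) + y*b" "Y - y = x*c + y*(d - 1)"
    unfolding X_def Y_def by (simp_all add: algebra_simps)
  hence "in_p (X - x)" "in_p (Y - y)" using ok p v by (simp_all add: in_p_add in_p_mult)
  ultimately show ?thesis using v' by (simp add: in_p_diff in_p_mult)
qed

lemma rep_cross_in_p_imp_eq:
  assumes "i < 8" "j < 8" and p: "in_p (fst (rep j) * snd (rep i) - snd (rep j) * fst (rep i))"
  shows "i = j"
proof -
  have "fst (rep j) * snd (rep i) - snd (rep j) * fst (rep i) =
        of_int (if i < 7 \<and> j < 7 then int j - int i else if i < 7 then 1 else if j < 7 then -1 else 0)"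
    by (simp add: rep_def)
  hence "7 dvd (if i < 7 \<and> j < 7 then int j - int i else if i < 7 then 1 else if j < 7 then -1 else 0)"
    using p in_p_of_int_iff by simp
  thus ?thesis using assms by (auto split: if_splits) presburger
qed

lemma Gamma_p_rep_eq:
  assumes "i < 8" "j < 8" "\<gamma> \<in> Gamma_p" "act \<gamma> (cls (rep i)) = cls (rep j)"
  shows "i = j"
  using Gamma_p_orbit_cross_in_p[of \<gamma> "fst (rep i)" "snd (rep i)" "fst (rep j)" "snd (rep j)"]
    rep_cross_in_p_imp_eq[of i j] rep_K2nz rep_in_OK assms
  by simp

definition cusp_of_rep :: "nat \<Rightarrow> (real \<times> real) set set" where
  "cusp_of_rep j = cusp_rel `` {cls (rep j)}"

lemma cls_rep_P1K: "cls (rep j) \<in> P1K"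
  unfolding P1K_iff using rep_K2nz by blast

lemma cusps_eq_image_cusp_of_rep: "cusps = cusp_of_rep ` {..<8}"
proof -
  have "cusp_rel `` {P} \<in> cusp_of_rep ` {..<8}" if P: "P \<in> P1K" for P
  proof -
    obtain j \<gamma> where j: "j < 8" "\<gamma> \<in> Gamma_p" "P = act \<gamma> (cls (rep j))"
      using P1K_Gamma_p_rep[OF P] by blast
    hence "(cls (rep j), P) \<in> cusp_rel" using P cls_rep_P1K by (auto simp: cusp_rel_iff)
    hence "cusp_of_rep j = cusp_rel `` {P}"
      unfolding cusp_of_rep_def using equiv_class_eq[OF equiv_cusp_rel] by blast
    thus ?thesis using j(1) by force
  qed
  thus ?thesis unfolding cusps_def quotient_def cusp_of_rep_def using cls_rep_P1K by blast
qed

lemma inj_on_cusp_of_rep: "inj_on cusp_of_rep {..<8}"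
proof (rule inj_onI)
  fix i j assume ij: "i \<in> {..<8}" "j \<in> {..<8}" and "cusp_of_rep i = cusp_of_rep j"
  hence "(cls (rep i), cls (rep j)) \<in> cusp_rel"
    unfolding cusp_of_rep_def using eq_equiv_class_iff[OF equiv_cusp_rel] cls_rep_P1K by blast
  thus "i = j" using Gamma_p_rep_eq ij unfolding cusp_rel_iff by auto
qed

theorem lemma3p1:
  shows "card cusps = 8 \<and>
         (\<forall>C\<in>cusps. \<forall>D\<in>cusps. \<exists>g\<in>SL2O. act g ` C = D)"
proof
  show "card cusps = 8"
    unfolding cusps_eq_image_cusp_of_rep using card_image[OF inj_on_cusp_of_rep] by simp
  show "\<forall>C\<in>cusps. \<forall>D\<in>cusps. \<exists>g\<in>SL2O. act g ` C = D"
  proof (intro ballI)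
    fix C D assume "C \<in> cusps" "D \<in> cusps"
    then obtain P Q where PQ: "P \<in> P1K" "Q \<in> P1K" "C = cusp_rel `` {P}" "D = cusp_rel `` {Q}"
      unfolding cusps_def quotient_def by blast
    then obtain g where "g \<in> SL2O" "act g P = Q" using SL2O_transitive_P1K by blast
    thus "\<exists>g\<in>SL2O. act g ` C = D" using act_cusp_rel_Image PQ by metis
  qed
qed

end
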